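(* Let $V$ be a real Hilbert space, $\mathcal D$ a dictionary, $V_n\subset V$ a subspace of dimension $n$ with orthonormal basis $\Phi=(\phi_1,\dots,\phi_n)$, and $\kappa\in(0,1)$. Let $(W_m)_{m\ge0}$ be generated by the worst case OMP algorithm with parameter $\kappa$. Then for every $\Psi=(\psi_1,\dots,\psi_n)\in V^n$, $$r_m\le4\frac{n^2\|\Psi\|_{\ell^1(\mathcal D)}^2}{\kappa^2}(m+1)^{-1}+n^2\|\Phi-\Psi\|^2\qquad\text{for all }m\ge1,$$ where $\|\Phi-\Psi\|^2=\sum_{i=1}^n\|\phi_i-\psi_i\|^2$.
   Context: A dictionary is a set $\mathcal D\subset V$ of elements with $\|\omega\|=1$ for all $\omega\in\mathcal D$ whose finite linear combinations are dense in $V$. Worst case OMP: $W_0=\{0\}$; for $k\ge1$, take $v_k\in\operatorname{argmax}\{\|v-P_{W_{k-1}}v\|: v\in V_n,\ \|v\|=1\}$, then choose $\omega_k\in\mathcal D$ with $|\langle v_k-P_{W_{k-1}}v_k,\omega_k\rangle|\ge\kappa\sup_{\omega\in\mathcal D}|\langle v_k-P_{W_{k-1}}v_k,\omega\rangle|$, and set $W_k=\operatorname{span}\{\omega_1,\dots,\omega_k\}$ ($P_X$ is the orthogonal projection onto $X$). The residual is $r_m=\sum_{i=1}^n\|\phi_i-P_{W_m}\phi_i\|^2$. For $\Psi\in V^n$, $\|\Psi\|_{\ell^1(\mathcal D)}=\inf\{\sum_{\omega\in\mathcal D}\|c_\omega\|_2:\psi_i=\sum_{\omega\in\mathcal D}c_{\omega,i}\,\omega,\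 i=1,\dots,n\}$ with $c_\omega\in\mathbb R^n$ (countably many nonzero; infimum of the empty set is $+\infty$). *)

theory Defs
  imports "HOL-Analysis.Analysis"
begin

definition oproj :: "'a::real_inner set \<Rightarrow> 'a \<Rightarrow> 'a" where
  "oproj X v = (THE w. w \<in> X \<and> (\<forall>x\<in>X. inner (v - w) x = 0))"

definition dictionary :: "'a::real_normed_vector set \<Rightarrow> bool" where
  "dictionary D \<longleftrightarrow> (\<forall>w\<in>D. norm w = 1) \<and> closure (span D) = UNIV"

definition orthonormal_fam :: "nat \<Rightarrow> (nat \<Rightarrow> 'a::real_inner) \<Rightarrow> bool" where
  "orthonormal_fam n \<phi> \<longleftrightarrow>
     (\<forall>i<n. \<forall>j<n. inner (\<phi> i) (\<phi> j) = (if i = j then 1 else 0))"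

definition Wsp :: "(nat \<Rightarrow> 'a::real_vector) \<Rightarrow> nat \<Rightarrow> 'a set" where
  "Wsp \<omega> k = span (\<omega> ` {1..k})"

definition worst_case_OMP ::
  "'a::real_inner set \<Rightarrow> 'a set \<Rightarrow> real \<Rightarrow> (nat \<Rightarrow> 'a) \<Rightarrow> (nat \<Rightarrow> 'a) \<Rightarrow> bool" where
  "worst_case_OMP D Vn \<kappa> v \<omega> \<longleftrightarrow>
     (\<forall>k\<ge>1.
        v k \<in> Vn \<and> norm (v k) = 1 \<and>
        (\<forall>u\<in>Vn. norm u = 1 \<longrightarrow>
            norm (u - oproj (Wsp \<omega> (k - 1)) u)
              \<le> norm (v k - oproj (Wsp \<omega> (k - 1)) (v k))) \<and>
        \<omega> k \<in> D \<and>
        \<bar>inner (v k - oproj (Wsp \<omega> (k - 1)) (v k)) (\<omega> k)\<bar>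
          \<ge> \<kappa> * (SUP w\<in>D. \<bar>inner (v k - oproj (Wsp \<omega> (k - 1)) (v k)) w\<bar>))"

definition residual :: "nat \<Rightarrow> (nat \<Rightarrow> 'a::real_inner) \<Rightarrow> 'a set \<Rightarrow> real" where
  "residual n \<phi> W = (\<Sum>i<n. (norm (\<phi> i - oproj W (\<phi> i)))\<^sup>2)"

text \<open>Representations with divergent cost contribute +infinity and
  are therefore omitted; the infimum of the empty set is +infinity.\<close>
definition l1_norm :: "'a::real_normed_vector set \<Rightarrow> nat \<Rightarrow> (nat \<Rightarrow> 'a) \<Rightarrow> ereal" where
  "l1_norm D n \<psi> = Inf {ereal (\<Sum>\<^sub>\<infinity>w\<in>D. sqrt (\<Sum>i<n. (c w i)\<^sup>2)) | c.
      countable {w\<in>D. \<exists>i<n. c w i \<noteq> 0} \<and>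
      (\<lambda>w. sqrt (\<Sum>i<n. (c w i)\<^sup>2)) summable_on D \<and>
      (\<forall>i<n. ((\<lambda>w. c w i *\<^sub>R w) has_sum \<psi> i) D)}"

end

theory Submission
  imports Defs
begin

text \<open>Let \<open>e\<^sub>k\<close> be the residual of the worst approximated unit vector of \<open>V\<^sub>n\<close> before step \<open>k\<close>.
  Adding \<open>\<omega>\<^sub>k\<close> lowers \<open>r\<close> by at least \<open>\<langle>e\<^sub>k, \<omega>\<^sub>k\<rangle>\<^sup>2\<close>, while \<open>r\<^sub>k \<le> n \<parallel>e\<^sub>k\<parallel>\<^sup>2\<close>. Expanding \<open>\<Psi>\<close> over the
  dictionary gives \<open>\<parallel>e\<^sub>k\<parallel>\<^sup>2 \<le> 2 sup\<^sub>\<omega> |\<langle>e\<^sub>k, \<omega>\<rangle>| \<parallel>\<Psi>\<parallel>\<^sub>\<ell>\<^sub>1 + \<parallel>\<Phi> - \<Psi>\<parallel>\<^sup>2\<close>, so by the weak greedy choice of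
  \<open>\<omega>\<^sub>k\<close> the excess \<open>b\<^sub>k = r\<^sub>k - n \<parallel>\<Phi> - \<Psi>\<parallel>\<^sup>2\<close> satisfies \<open>\<kappa>\<^sup>2 b\<^sub>k\<^sup>2 \<le> 4 n\<^sup>2 \<parallel>\<Psi>\<parallel>\<^sub>\<ell>\<^sub>1\<^sup>2 (b\<^sub>k - b\<^sub>k\<^sub>+\<^sub>1)\<close>
  whenever it is positive. Such a sequence decays like \<open>1/(m+1)\<close>, because \<open>1/b\<^sub>k\<close> grows by a
  constant at each step.\<close>

lemma oproj_unique:
  fixes v w :: "'a::real_inner"
  assumes "subspace X" "w \<in> X" "\<forall>x\<in>X. inner (v - w) x = 0"
  shows "oproj X v = w"
  unfolding oproj_def
proof (rule the_equality)
  show "w \<in> X \<and> (\<forall>x\<in>X. inner (v - w) x = 0)" using assms by blast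
next
  fix w' assume w': "w' \<in> X \<and> (\<forall>x\<in>X. inner (v - w') x = 0)"
  then have "w - w' \<in> X" using assms by (simp add: subspace_diff)
  then have "inner (v - w') (w - w') - inner (v - w) (w - w') = 0" using assms w' by simp
  then have "inner (w - w') (w - w') = 0" by (simp add: inner_diff_left)
  then show "w' = w" by simp
qed

lemma oproj_exists:
  fixes S :: "'a::real_inner set"
  assumes "finite S"
  shows "\<exists>w\<in>span S. \<forall>x\<in>span S. inner (v - w) x = 0"
  using assms
proof (induction S arbitrary: v rule: finite_induct)
  case empty then show ?case by auto
next
  case (insert a S)
  obtain w where w: "w \<in> span S" "\<forall>x\<in>span S. inner (v - w) x = 0" using insert.IH by blast
  obtain p where p: "p \<in> span S" "\<forall>x\<in>span S. inner (a - p) x = 0" using insert.IH by blast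
  show ?case
  proof (cases "a \<in> span S")
    case True
    then show ?thesis using w by (auto simp: span_redundant)
  next
    case False
    \<comment> \<open>Gram--Schmidt: correct \<open>w\<close> along the component of \<open>a\<close> orthogonal to \<open>span S\<close>.\<close>
    define t where "t = inner (v - w) (a - p) / (norm (a - p))\<^sup>2"
    have np: "a - p \<noteq> 0" using False p by auto
    have "w + t *\<^sub>R (a - p) \<in> span (insert a S)"
      using w p by (meson span_add span_base span_diff span_mono span_scale insertI1 subset_insertI subsetD)
    moreover have "orthogonal (v - (w + t *\<^sub>R (a - p))) x" if "x \<in> span (insert a S)" for x
      using that
    proof (rule orthogonal_to_span)
      fix y assume y: "y \<in> insert a S"
      show "orthogonal (v - (w + t *\<^sub>R (a - p))) y"
      proof (cases "y = a")
        case True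
        have "inner (v - w) p = 0" "inner (a - p) p = 0" using w p by auto
        then have "inner (v - w) a = inner (v - w) (a - p)" "inner (a - p) a = (norm (a - p))\<^sup>2"
          by (auto simp: inner_diff_right power2_norm_eq_inner)
        then show ?thesis using True np
          by (simp add: orthogonal_def inner_diff_left inner_add_left t_def)
      next
        case False
        then have "y \<in> span S" using y by (simp add: span_base)
        then show ?thesis using w p by (simp add: orthogonal_def inner_diff_left inner_add_left)
      qed
    qed
    ultimately show ?thesis unfolding orthogonal_def by blast
  qed
qed

lemma
  fixes S :: "'a::real_inner set"
  assumes "finite S"
  shows oproj_in_span: "oproj (span S) v \<in> span S"
    and inner_oproj_residual: "x \<in> span S \<Longrightarrow> inner (v - oproj (span S) v) x = 0"
proof -
  obtain w where "w \<in> span S" "\<forall>x\<in>span S. inner (v - w) x = 0"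
    using oproj_exists[OF assms] by blast
  moreover from this have "oproj (span S) v = w" by (intro oproj_unique) auto
  ultimately show "oproj (span S) v \<in> span S" "x \<in> span S \<Longrightarrow> inner (v - oproj (span S) v) x = 0"
    by auto
qed

lemma oproj_best_approximation:
  fixes S :: "'a::real_inner set"
  assumes "finite S" "y \<in> span S"
  shows "norm (v - oproj (span S) v) \<le> norm (v - y)"
proof -
  let ?p = "oproj (span S) v"
  have "?p - y \<in> span S" using assms oproj_in_span by (blast intro: span_diff)
  then have "orthogonal (v - ?p) (?p - y)" using assms(1) inner_oproj_residual
    by (simp add: orthogonal_def)
  then have "(norm (v - y))\<^sup>2 = (norm (v - ?p))\<^sup>2 + (norm (?p - y))\<^sup>2"
    using norm_add_Pythagorean by fastforce
  then have "(norm (v - ?p))\<^sup>2 \<le> (norm (v - y))\<^sup>2" by simp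
  then show ?thesis by (rule power2_le_imp_le) simp
qed

lemma norm_oproj_residual_insert_le:
  fixes S :: "'a::real_inner set"
  assumes "finite S" "norm a = 1"
  shows "(norm (v - oproj (span (insert a S)) v))\<^sup>2
     \<le> (norm (v - oproj (span S) v))\<^sup>2 - (inner (v - oproj (span S) v) a)\<^sup>2"
proof -
  define e where "e = v - oproj (span S) v"
  define t where "t = inner e a"
  have "oproj (span S) v + t *\<^sub>R a \<in> span (insert a S)"
    using oproj_in_span[OF assms(1)]
    by (meson span_add span_base span_mono span_scale insertI1 subset_insertI subsetD)
  then have "norm (v - oproj (span (insert a S)) v) \<le> norm (e - t *\<^sub>R a)"
    using oproj_best_approximation[of "insert a S"] assms(1) unfolding e_def
    by (fastforce simp: algebra_simps)
  then have "(norm (v - oproj (span (insert a S)) v))\<^sup>2 \<le> (norm (e - t *\<^sub>R a))\<^sup>2"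
    by (simp add: power_mono)
  also have "(norm (e - t *\<^sub>R a))\<^sup>2 = (norm e)\<^sup>2 - t\<^sup>2"
    using assms(2) unfolding t_def power2_norm_eq_inner norm_eq_1
    by (simp add: inner_diff_left inner_diff_right inner_commute power2_eq_square)
  finally show ?thesis unfolding e_def t_def .
qed

lemma residual_insert_le:
  fixes S :: "'a::real_inner set"
  assumes "finite S" "norm a = 1"
  shows "residual n \<phi> (span (insert a S))
     \<le> residual n \<phi> (span S) - (\<Sum>i<n. (inner (\<phi> i - oproj (span S) (\<phi> i)) a)\<^sup>2)"
  unfolding residual_def sum_subtractf[symmetric]
  by (intro sum_mono norm_oproj_residual_insert_le[OF assms])

lemma orthonormal_fam_expansion:
  fixes \<phi> :: "nat \<Rightarrow> 'a::real_inner"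
  assumes "orthonormal_fam n \<phi>" "x \<in> span (\<phi> ` {..<n})"
  shows "x = (\<Sum>i<n. inner x (\<phi> i) *\<^sub>R \<phi> i)"
  using assms(2)
proof (induction rule: span_induct)
  case (step y)
  then obtain j where j: "j < n" "y = \<phi> j" by auto
  have "(\<Sum>i<n. inner (\<phi> j) (\<phi> i) *\<^sub>R \<phi> i) = (\<Sum>i<n. (if i = j then \<phi> i else 0))"
    using assms(1) j(1) unfolding orthonormal_fam_def
    by (intro sum.cong) (auto simp: inner_commute)
  with j show ?case by (simp add: sum.delta)
next
  show "subspace {x. x = (\<Sum>i<n. inner x (\<phi> i) *\<^sub>R \<phi> i)}"
    unfolding subspace_def
  proof (intro conjI allI impI ballI)
    fix c :: real and x assume "x \<in> {x. x = (\<Sum>i<n. inner x (\<phi> i) *\<^sub>R \<phi> i)}"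
    then have "c *\<^sub>R x = c *\<^sub>R (\<Sum>i<n. inner x (\<phi> i) *\<^sub>R \<phi> i)" by simp
    also have "\<dots> = (\<Sum>i<n. inner (c *\<^sub>R x) (\<phi> i) *\<^sub>R \<phi> i)" by (simp add: scaleR_sum_right)
    finally show "c *\<^sub>R x \<in> {x. x = (\<Sum>i<n. inner x (\<phi> i) *\<^sub>R \<phi> i)}" by (simp only: mem_Collect_eq)
  qed (auto simp: inner_add_left scaleR_add_left sum.distrib)
qed

lemma norm_sum_orthonormal_fam:
  fixes \<phi> :: "nat \<Rightarrow> 'a::real_inner"
  assumes "orthonormal_fam n \<phi>"
  shows "(norm (\<Sum>i<n. a i *\<^sub>R \<phi> i))\<^sup>2 = (\<Sum>i<n. (a i)\<^sup>2)"
proof -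
  have "(norm (\<Sum>i<n. a i *\<^sub>R \<phi> i))\<^sup>2 = (\<Sum>i<n. \<Sum>j<n. a i * (a j * inner (\<phi> j) (\<phi> i)))"
    unfolding power2_norm_eq_inner inner_sum_left inner_sum_right inner_scaleR_left inner_scaleR_right
    by (simp add: sum_distrib_left)
  also have "\<dots> = (\<Sum>i<n. \<Sum>j<n. if j = i then a i * a i else 0)"
    using assms unfolding orthonormal_fam_def by (intro sum.cong refl) auto
  finally show ?thesis by (simp add: sum.delta power2_eq_square)
qed

lemma orthonormal_fam_Parseval:
  fixes \<phi> :: "nat \<Rightarrow> 'a::real_inner"
  assumes "orthonormal_fam n \<phi>" "x \<in> span (\<phi> ` {..<n})"
  shows "(\<Sum>i<n. (inner x (\<phi> i))\<^sup>2) = (norm x)\<^sup>2"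
  using norm_sum_orthonormal_fam[OF assms(1), of "\<lambda>i. inner x (\<phi> i)"]
    orthonormal_fam_expansion[OF assms] by simp

lemma oproj_residual_sum:
  fixes S :: "'a::real_inner set"
  assumes "finite S"
  shows "(\<Sum>i\<in>I. a i *\<^sub>R x i) - oproj (span S) (\<Sum>i\<in>I. a i *\<^sub>R x i)
     = (\<Sum>i\<in>I. a i *\<^sub>R (x i - oproj (span S) (x i)))"
proof -
  have "oproj (span S) (\<Sum>i\<in>I. a i *\<^sub>R x i) = (\<Sum>i\<in>I. a i *\<^sub>R oproj (span S) (x i))"
  proof (rule oproj_unique)
    show "(\<Sum>i\<in>I. a i *\<^sub>R oproj (span S) (x i)) \<in> span S"
      using oproj_in_span[OF assms] by (intro span_sum span_scale) auto
    show "\<forall>y\<in>span S. inner ((\<Sum>i\<in>I. a i *\<^sub>R x i) - (\<Sum>i\<in>I. a i *\<^sub>R oproj (span S) (x i))) y = 0"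
    proof
      fix y assume "y \<in> span S"
      then have "(\<Sum>i\<in>I. a i * inner (x i - oproj (span S) (x i)) y) = 0"
        using inner_oproj_residual[OF assms] by simp
      then show "inner ((\<Sum>i\<in>I. a i *\<^sub>R x i) - (\<Sum>i\<in>I. a i *\<^sub>R oproj (span S) (x i))) y = 0"
        by (simp add: inner_diff_left inner_sum_left sum_subtractf algebra_simps)
    qed
  qed simp
  then show ?thesis by (simp add: sum_subtractf scaleR_diff_right)
qed

lemma inner_oproj_residual_sq_le:
  fixes \<phi> :: "nat \<Rightarrow> 'a::real_inner"
  assumes "orthonormal_fam n \<phi>" "v \<in> span (\<phi> ` {..<n})" "norm v = 1" "finite S"
  shows "(inner (v - oproj (span S) v) w)\<^sup>2 \<le> (\<Sum>i<n. (inner (\<phi> i - oproj (span S) (\<phi> i)) w)\<^sup>2)"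
proof -
  define a where "a i = inner v (\<phi> i)" for i
  have "v - oproj (span S) v = (\<Sum>i<n. a i *\<^sub>R (\<phi> i - oproj (span S) (\<phi> i)))"
    using orthonormal_fam_expansion[OF assms(1,2)] oproj_residual_sum[OF assms(4), of a \<phi> "{..<n}"]
    unfolding a_def by simp
  then have "(inner (v - oproj (span S) v) w)\<^sup>2
      = (\<Sum>i<n. a i * inner (\<phi> i - oproj (span S) (\<phi> i)) w)\<^sup>2"
    by (simp add: inner_sum_left)
  also have "\<dots> \<le> (\<Sum>i<n. (a i)\<^sup>2) * (\<Sum>i<n. (inner (\<phi> i - oproj (span S) (\<phi> i)) w)\<^sup>2)"
    by (rule Cauchy_Schwarz_ineq_sum)
  also have "(\<Sum>i<n. (a i)\<^sup>2) = 1"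
    using orthonormal_fam_Parseval[OF assms(1,2)] assms(3) unfolding a_def by simp
  finally show ?thesis by simp
qed

lemma residual_le_worst_case:
  fixes \<phi> :: "nat \<Rightarrow> 'a::real_inner"
  assumes orth: "orthonormal_fam n \<phi>"
    and worst: "\<forall>u\<in>span (\<phi> ` {..<n}). norm u = 1 \<longrightarrow> norm (u - oproj W u) \<le> \<sigma>"
  shows "residual n \<phi> W \<le> real n * \<sigma>\<^sup>2"
proof -
  have "residual n \<phi> W \<le> (\<Sum>i<n. \<sigma>\<^sup>2)"
    unfolding residual_def
  proof (rule sum_mono)
    fix i assume "i \<in> {..<n}"
    moreover from this have "norm (\<phi> i) = 1"
      using orth unfolding orthonormal_fam_def by (simp add: norm_eq_1)
    ultimately have "norm (\<phi> i - oproj W (\<phi> i)) \<le> \<sigma>" using worst by (simp add: span_base)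
    then show "(norm (\<phi> i - oproj W (\<phi> i)))\<^sup>2 \<le> \<sigma>\<^sup>2" by (simp add: power_mono)
  qed
  then show ?thesis by simp
qed

lemma has_sum_sum:
  fixes f :: "'i \<Rightarrow> 'b \<Rightarrow> 'c::topological_comm_monoid_add"
  assumes "finite I" "\<And>i. i \<in> I \<Longrightarrow> (f i has_sum s i) A"
  shows "((\<lambda>x. \<Sum>i\<in>I. f i x) has_sum (\<Sum>i\<in>I. s i)) A"
  using assms by (induction I rule: finite_induct) (auto intro: has_sum_add)

lemma abs_inner_le_SUP_unit:
  fixes e :: "'a::real_inner"
  assumes "\<forall>w\<in>D. norm w = 1" "w \<in> D"
  shows "\<bar>inner e w\<bar> \<le> (SUP w\<in>D. \<bar>inner e w\<bar>)"
proof (rule cSUP_upper[OF assms(2)])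
  show "bdd_above ((\<lambda>w. \<bar>inner e w\<bar>) ` D)"
  proof (rule bdd_aboveI2)
    fix w assume "w \<in> D"
    then show "\<bar>inner e w\<bar> \<le> norm e" using assms(1) Cauchy_Schwarz_ineq2[of e w] by simp
  qed
qed

lemma sum_inner_representation_le:
  fixes e :: "'a::real_inner" and c :: "'a \<Rightarrow> nat \<Rightarrow> real"
  assumes bound: "\<forall>w\<in>D. \<bar>inner e w\<bar> \<le> s" and a: "(\<Sum>i<n. (a i)\<^sup>2) \<le> 1"
    and cost: "((\<lambda>w. sqrt (\<Sum>i<n. (c w i)\<^sup>2)) has_sum L) D"
    and rep: "\<forall>i<n. ((\<lambda>w. c w i *\<^sub>R w) has_sum \<psi> i) D"
  shows "(\<Sum>i<n. a i * inner e (\<psi> i)) \<le> s * L"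
proof -
  define g where "g w = (\<Sum>i<n. a i * c w i) * inner e w" for w
  have "((\<lambda>w. a i * inner e (c w i *\<^sub>R w)) has_sum a i * inner e (\<psi> i)) D" if "i < n" for i
    using rep that by (intro has_sum_cmult_right has_sum_bounded_linear[OF bounded_linear_inner_right]) auto
  then have "((\<lambda>w. \<Sum>i<n. a i * inner e (c w i *\<^sub>R w)) has_sum (\<Sum>i<n. a i * inner e (\<psi> i))) D"
    by (intro has_sum_sum) auto
  moreover have "(\<lambda>w. \<Sum>i<n. a i * inner e (c w i *\<^sub>R w)) = g"
    unfolding g_def by (simp add: sum_distrib_right mult.assoc)
  ultimately have g: "(g has_sum (\<Sum>i<n. a i * inner e (\<psi> i))) D" by simp
  have "g w \<le> s * sqrt (\<Sum>i<n. (c w i)\<^sup>2)" if "w \<in> D" for w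
  proof -
    have "(\<Sum>i<n. a i * c w i)\<^sup>2 \<le> (\<Sum>i<n. (a i)\<^sup>2) * (\<Sum>i<n. (c w i)\<^sup>2)"
      by (rule Cauchy_Schwarz_ineq_sum)
    also have "\<dots> \<le> (\<Sum>i<n. (c w i)\<^sup>2)"
      using a by (intro mult_left_le_one_le) (auto intro: sum_nonneg)
    finally have "\<bar>\<Sum>i<n. a i * c w i\<bar> \<le> sqrt (\<Sum>i<n. (c w i)\<^sup>2)"
      using real_sqrt_le_mono real_sqrt_abs by metis
    then have "\<bar>\<Sum>i<n. a i * c w i\<bar> * \<bar>inner e w\<bar> \<le> sqrt (\<Sum>i<n. (c w i)\<^sup>2) * s"
      using bound that by (intro mult_mono) (auto simp: sum_nonneg)
    moreover have "g w \<le> \<bar>\<Sum>i<n. a i * c w i\<bar> * \<bar>inner e w\<bar>"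
      unfolding g_def by (metis abs_ge_self abs_mult)
    ultimately show ?thesis by (simp add: mult.commute)
  qed
  then show ?thesis using has_sum_mono[OF g has_sum_cmult_right[OF cost]] by blast
qed

lemma sum_inner_le_half_sq:
  fixes e :: "'a::real_inner"
  assumes "(\<Sum>i<n. (a i)\<^sup>2) \<le> 1"
  shows "(\<Sum>i<n. a i * inner e (x i)) \<le> ((norm e)\<^sup>2 + (\<Sum>i<n. (norm (x i))\<^sup>2)) / 2"
proof -
  define E where "E = (\<Sum>i<n. (norm (x i))\<^sup>2)"
  have "(\<Sum>i<n. a i * inner e (x i))\<^sup>2 \<le> (\<Sum>i<n. (a i)\<^sup>2) * (\<Sum>i<n. (inner e (x i))\<^sup>2)"
    by (rule Cauchy_Schwarz_ineq_sum)
  also have "\<dots> \<le> (\<Sum>i<n. (inner e (x i))\<^sup>2)"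
    using assms by (intro mult_left_le_one_le) (auto intro: sum_nonneg)
  also have "\<dots> \<le> (\<Sum>i<n. (norm e)\<^sup>2 * (norm (x i))\<^sup>2)"
  proof (rule sum_mono)
    fix i
    have "\<bar>inner e (x i)\<bar> \<le> norm e * norm (x i)" by (rule Cauchy_Schwarz_ineq2)
    then have "\<bar>inner e (x i)\<bar>\<^sup>2 \<le> (norm e * norm (x i))\<^sup>2" by (rule power_mono) auto
    then show "(inner e (x i))\<^sup>2 \<le> (norm e)\<^sup>2 * (norm (x i))\<^sup>2"
      by (simp add: power_mult_distrib)
  qed
  also have "\<dots> = (norm e)\<^sup>2 * E" unfolding E_def by (simp add: sum_distrib_left)
  also have "\<dots> \<le> (((norm e)\<^sup>2 + E) / 2)\<^sup>2"
  proof -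
    have "0 \<le> (((norm e)\<^sup>2 - E) / 2)\<^sup>2" by simp
    also have "\<dots> = (((norm e)\<^sup>2 + E) / 2)\<^sup>2 - (norm e)\<^sup>2 * E"
      by (simp add: power2_eq_square field_simps)
    finally show ?thesis by simp
  qed
  finally show ?thesis unfolding E_def by (rule power2_le_imp_le) (simp add: sum_nonneg)
qed

text \<open>Test \<open>e = v - P v\<close> against \<open>v = \<Sum> a\<^sub>i \<phi>\<^sub>i\<close> and split \<open>\<phi>\<^sub>i = \<psi>\<^sub>i + (\<phi>\<^sub>i - \<psi>\<^sub>i)\<close>: the \<open>\<psi>\<close>-part
  is paid for by the dictionary expansion, the rest by Cauchy--Schwarz and AM--GM.\<close>

lemma norm_oproj_residual_sq_le:
  fixes \<phi> \<psi> :: "nat \<Rightarrow> 'a::real_inner" and c :: "'a \<Rightarrow> nat \<Rightarrow> real"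
  assumes orth: "orthonormal_fam n \<phi>" and v: "v \<in> span (\<phi> ` {..<n})" "norm v = 1"
    and S: "finite S"
    and bound: "\<forall>w\<in>D. \<bar>inner (v - oproj (span S) v) w\<bar> \<le> s"
    and cost: "((\<lambda>w. sqrt (\<Sum>i<n. (c w i)\<^sup>2)) has_sum L) D"
    and rep: "\<forall>i<n. ((\<lambda>w. c w i *\<^sub>R w) has_sum \<psi> i) D"
  shows "(norm (v - oproj (span S) v))\<^sup>2 \<le> 2 * s * L + (\<Sum>i<n. (norm (\<phi> i - \<psi> i))\<^sup>2)"
proof -
  define e where "e = v - oproj (span S) v"
  define a where "a i = inner v (\<phi> i)" for i
  have a: "(\<Sum>i<n. (a i)\<^sup>2) \<le> 1"
    using orthonormal_fam_Parseval[OF orth v(1)] v(2) unfolding a_def by simp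
  have "(norm e)\<^sup>2 = inner e v"
    using inner_oproj_residual[OF S] oproj_in_span[OF S] unfolding e_def
    by (simp add: power2_norm_eq_inner inner_diff_right)
  also have "\<dots> = (\<Sum>i<n. a i * inner e (\<psi> i)) + (\<Sum>i<n. a i * inner e (\<phi> i - \<psi> i))"
    by (subst orthonormal_fam_expansion[OF orth v(1)])
      (simp add: a_def inner_sum_right inner_diff_right algebra_simps flip: sum.distrib)
  also have "\<dots> \<le> s * L + ((norm e)\<^sup>2 + (\<Sum>i<n. (norm (\<phi> i - \<psi> i))\<^sup>2)) / 2"
    using sum_inner_representation_le[OF bound[folded e_def] a cost rep] sum_inner_le_half_sq[OF a]
    by (rule add_mono)
  finally show ?thesis unfolding e_def by argo
qed

lemma worst_case_OMP_step:
  fixes D :: "'a::real_inner set" and \<phi> \<psi> v \<omega> :: "nat \<Rightarrow> 'a" and c :: "'a \<Rightarrow> nat \<Rightarrow> real"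
  assumes D: "\<forall>w\<in>D. norm w = 1" and orth: "orthonormal_fam n \<phi>" and \<kappa>: "0 < \<kappa>"
    and omp: "worst_case_OMP D (span (\<phi> ` {..<n})) \<kappa> v \<omega>"
    and cost: "((\<lambda>w. sqrt (\<Sum>i<n. (c w i)\<^sup>2)) has_sum L) D"
    and rep: "\<forall>i<n. ((\<lambda>w. c w i *\<^sub>R w) has_sum \<psi> i) D"
  defines "r \<equiv> \<lambda>k. residual n \<phi> (Wsp \<omega> k)" and "\<epsilon> \<equiv> \<Sum>i<n. (norm (\<phi> i - \<psi> i))\<^sup>2"
  shows "r (Suc k) \<le> r k"
    and "real n * \<epsilon> < r k \<Longrightarrow> \<kappa>\<^sup>2 * (r k - real n * \<epsilon>)\<^sup>2 \<le> 4 * (real n)\<^sup>2 * L\<^sup>2 * (r k - r (Suc k))"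
proof -
  define S where "S = \<omega> ` {1..k}"
  define P where "P = oproj (span S)"
  define e where "e = v (Suc k) - P (v (Suc k))"
  define s where "s = (SUP w\<in>D. \<bar>inner e w\<bar>)"
  have S: "finite S" unfolding S_def by simp
  have W: "Wsp \<omega> k = span S" "Wsp \<omega> (Suc k) = span (insert (\<omega> (Suc k)) S)"
    unfolding S_def Wsp_def by (simp_all add: atLeastAtMostSuc_conv)
  have vk: "v (Suc k) \<in> span (\<phi> ` {..<n})" "norm (v (Suc k)) = 1"
    and worst: "\<forall>u\<in>span (\<phi> ` {..<n}). norm u = 1 \<longrightarrow> norm (u - P u) \<le> norm e"
    and \<omega>: "\<omega> (Suc k) \<in> D" "\<kappa> * s \<le> \<bar>inner e (\<omega> (Suc k))\<bar>"
    using omp[unfolded worst_case_OMP_def, rule_format, of "Suc k"]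
    unfolding e_def P_def s_def W(1)[symmetric] by auto
  have decrease: "r (Suc k) \<le> r k - (inner e (\<omega> (Suc k)))\<^sup>2"
    using residual_insert_le[OF S D[rule_format, OF \<omega>(1)], of n \<phi>]
      inner_oproj_residual_sq_le[OF orth vk S, of "\<omega> (Suc k)"]
    unfolding r_def W e_def P_def by simp
  then show "r (Suc k) \<le> r k" using zero_le_power2[of "inner e (\<omega> (Suc k))"] by linarith
  have "r k \<le> real n * (norm e)\<^sup>2"
    using residual_le_worst_case[OF orth worst[unfolded P_def]] unfolding r_def W .
  also have "\<dots> \<le> real n * (2 * s * L + \<epsilon>)"
    using norm_oproj_residual_sq_le[OF orth vk S _ cost rep] abs_inner_le_SUP_unit[OF D]
    unfolding e_def P_def s_def \<epsilon>_def by (simp add: mult_left_mono)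
  finally have "r k - real n * \<epsilon> \<le> 2 * real n * L * s" by (simp add: algebra_simps)
  moreover have "0 \<le> 2 * real n * L"
    using has_sum_nonneg[OF cost] by (simp add: sum_nonneg)
  ultimately have "\<kappa> * (r k - real n * \<epsilon>) \<le> 2 * real n * L * (\<kappa> * s)"
    using \<kappa> by (simp add: mult_left_mono mult.left_commute)
  also have "\<dots> \<le> 2 * real n * L * \<bar>inner e (\<omega> (Suc k))\<bar>"
    using \<omega>(2) \<open>0 \<le> 2 * real n * L\<close> by (rule mult_left_mono)
  finally have bound: "\<kappa> * (r k - real n * \<epsilon>) \<le> 2 * real n * L * \<bar>inner e (\<omega> (Suc k))\<bar>" .
  assume "real n * \<epsilon> < r k"
  then have "\<kappa>\<^sup>2 * (r k - real n * \<epsilon>)\<^sup>2 \<le> (2 * real n * L * \<bar>inner e (\<omega> (Suc k))\<bar>)\<^sup>2"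
    using bound \<kappa> by (simp flip: power_mult_distrib add: power_mono)
  also have "\<dots> = 4 * (real n)\<^sup>2 * L\<^sup>2 * (inner e (\<omega> (Suc k)))\<^sup>2"
    by (simp add: power_mult_distrib)
  also have "\<dots> \<le> 4 * (real n)\<^sup>2 * L\<^sup>2 * (r k - r (Suc k))"
    using decrease by (intro mult_left_mono) auto
  finally show "\<kappa>\<^sup>2 * (r k - real n * \<epsilon>)\<^sup>2 \<le> 4 * (real n)\<^sup>2 * L\<^sup>2 * (r k - r (Suc k))" .
qed

lemma inverse_increment_of_quadratic_decrease:
  fixes x y B :: real
  assumes "0 < y" "y \<le> x" "x\<^sup>2 \<le> B * (x - y)"
  shows "1 / x + 1 / B \<le> 1 / y"
proof -
  have "0 < x" using assms by linarith
  then have "0 < B * (x - y)" using assms(3) by (meson less_le_trans zero_less_power)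
  then have "0 < B" using assms(2) by (simp add: zero_less_mult_iff)
  have "x * y \<le> x * x" using \<open>0 < x\<close> assms(2) by (simp add: mult_left_mono)
  then have "x * y \<le> B * (x - y)" using assms(3) by (simp add: power2_eq_square)
  then show ?thesis using \<open>0 < x\<close> \<open>0 < B\<close> assms(1) by (simp add: field_simps)
qed

lemma decay_of_quadratic_decrease:
  fixes b :: "nat \<Rightarrow> real"
  assumes B: "0 \<le> B" and mono: "\<And>k. b (Suc k) \<le> b k"
    and decrease: "\<And>k. 0 < b k \<Longrightarrow> (b k)\<^sup>2 \<le> B * (b k - b (Suc k))"
    and m: "1 \<le> m"
  shows "b m \<le> B / (real m + 1)"
proof (cases "0 < b m")
  case pos: True
  have increment: "1 / b k + 1 / B \<le> 1 / b (Suc k)" if "0 < b (Suc k)" for k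
    using that mono[of k] decrease[of k] by (intro inverse_increment_of_quadratic_decrease) auto
  have "(real j + 1) / B \<le> 1 / b j" if "1 \<le> j" "0 < b j" for j
    using that
  proof (induction j rule: dec_induct)
    case base
    then have "0 < b 0" using mono[of 0] by simp
    have "b 0 * b 0 \<le> B * (b 0 - b 1)" using decrease \<open>0 < b 0\<close> by (simp add: power2_eq_square)
    also have "\<dots> \<le> B * b 0" using B base by (simp add: mult_left_mono)
    finally have "b 0 \<le> B" using \<open>0 < b 0\<close> by (simp add: mult.commute)
    then have "1 / B \<le> 1 / b 0" using \<open>0 < b 0\<close> by (simp add: divide_left_mono)
    then show ?case using increment[of 0] base by simp
  next
    case (step j)
    then show ?case using increment[of j] mono[of j] by (simp add: add_divide_distrib)
  qed
  note reciprocal = this[OF m pos]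
  have "0 < b (m - 1)" using mono[of "m - 1"] m pos by simp
  then have "B \<noteq> 0" using decrease[of "m - 1"] by auto
  then show ?thesis using reciprocal pos B by (simp add: field_simps)
next
  case False
  moreover have "0 \<le> B / (real m + 1)" using B by simp
  ultimately show ?thesis by linarith
qed

lemma worst_case_OMP_residual_bound:
  fixes D :: "'a::real_inner set" and \<phi> \<psi> v \<omega> :: "nat \<Rightarrow> 'a" and c :: "'a \<Rightarrow> nat \<Rightarrow> real"
  assumes D: "\<forall>w\<in>D. norm w = 1" and orth: "orthonormal_fam n \<phi>" and \<kappa>: "0 < \<kappa>"
    and omp: "worst_case_OMP D (span (\<phi> ` {..<n})) \<kappa> v \<omega>"
    and cost: "((\<lambda>w. sqrt (\<Sum>i<n. (c w i)\<^sup>2)) has_sum L) D"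
    and rep: "\<forall>i<n. ((\<lambda>w. c w i *\<^sub>R w) has_sum \<psi> i) D"
    and m: "1 \<le> m"
  shows "residual n \<phi> (Wsp \<omega> m)
    \<le> 4 * (real n)\<^sup>2 / \<kappa>\<^sup>2 / (real m + 1) * L\<^sup>2 + (real n)\<^sup>2 * (\<Sum>i<n. (norm (\<phi> i - \<psi> i))\<^sup>2)"
proof -
  define \<epsilon> where "\<epsilon> = (\<Sum>i<n. (norm (\<phi> i - \<psi> i))\<^sup>2)"
  define b where "b k = residual n \<phi> (Wsp \<omega> k) - real n * \<epsilon>" for k
  note step = worst_case_OMP_step[OF D orth \<kappa> omp cost rep]
  have "b m \<le> 4 * (real n)\<^sup>2 * L\<^sup>2 / \<kappa>\<^sup>2 / (real m + 1)"
  proof (rule decay_of_quadratic_decrease[OF _ _ _ m])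
    show "b (Suc k) \<le> b k" for k unfolding b_def using step(1)[of k] by simp
    show "(b k)\<^sup>2 \<le> 4 * (real n)\<^sup>2 * L\<^sup>2 / \<kappa>\<^sup>2 * (b k - b (Suc k))" if "0 < b k" for k
      using step(2)[of k] that \<kappa> unfolding b_def \<epsilon>_def by (simp add: field_simps)
  qed simp
  moreover have "real n * \<epsilon> \<le> (real n)\<^sup>2 * \<epsilon>"
  proof (rule mult_right_mono)
    show "real n \<le> (real n)\<^sup>2" by (cases n) (auto simp: power2_eq_square)
  qed (auto simp: \<epsilon>_def intro: sum_nonneg)
  ultimately show ?thesis unfolding b_def \<epsilon>_def by (simp add: field_simps)
qed

lemma ereal_le_mult_Inf_sq:
  fixes C :: "ereal set"
  assumes K: "0 < K" and nonneg: "\<And>x. x \<in> C \<Longrightarrow> 0 \<le> x"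
    and bound: "\<And>x. x \<in> C \<Longrightarrow> ereal R \<le> ereal K * x\<^sup>2 + ereal F"
  shows "ereal R \<le> ereal K * (Inf C)\<^sup>2 + ereal F"
proof -
  define q where "q = sqrt (max 0 ((R - F) / K))"
  have "ereal q \<le> Inf C"
  proof (rule Inf_greatest)
    fix x assume x: "x \<in> C"
    show "ereal q \<le> x"
    proof (cases x)
      case (real L)
      then have "ereal R \<le> ereal (K * L\<^sup>2 + F)" "0 \<le> L" using bound[OF x] nonneg[OF x] by simp_all
      then have "(R - F) / K \<le> L\<^sup>2" using K by (simp add: field_simps)
      then have "max 0 ((R - F) / K) \<le> L\<^sup>2" by simp
      then have "q \<le> sqrt (L\<^sup>2)" unfolding q_def by (rule real_sqrt_le_mono)
      then show ?thesis using real \<open>0 \<le> L\<close> by simp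
    next
      case MInf
      then show ?thesis using nonneg[OF x] by simp
    qed simp
  qed
  show ?thesis
  proof (cases "Inf C")
    case (real L)
    have "0 \<le> q" unfolding q_def by simp
    then have "q\<^sup>2 \<le> L\<^sup>2" using \<open>ereal q \<le> Inf C\<close> real by (intro power_mono) auto
    then have "K * q\<^sup>2 \<le> K * L\<^sup>2" using K by simp
    moreover have "(R - F) / K \<le> q\<^sup>2" unfolding q_def by simp
    then have "R - F \<le> K * q\<^sup>2" using K by (simp add: pos_divide_le_eq mult.commute)
    ultimately have "R \<le> K * L\<^sup>2 + F" by linarith
    then show ?thesis using real by simp
  next
    case PInf
    then show ?thesis using K by simp
  next
    case MInf
    then show ?thesis using \<open>ereal q \<le> Inf C\<close> by simp
  qed
qed

lemma worst_case_OMP_residual_le_l1_norm: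
  fixes D :: "'a::real_inner set" and \<phi> \<psi> v \<omega> :: "nat \<Rightarrow> 'a"
  assumes D: "\<forall>w\<in>D. norm w = 1" and orth: "orthonormal_fam n \<phi>" and \<kappa>: "0 < \<kappa>"
    and omp: "worst_case_OMP D (span (\<phi> ` {..<n})) \<kappa> v \<omega>"
    and m: "1 \<le> m"
  shows "ereal (residual n \<phi> (Wsp \<omega> m))
    \<le> ereal (4 * (real n)\<^sup>2 / \<kappa>\<^sup>2 / (real m + 1)) * (l1_norm D n \<psi>)\<^sup>2
      + ereal ((real n)\<^sup>2 * (\<Sum>i<n. (norm (\<phi> i - \<psi> i))\<^sup>2))"
proof (cases "n = 0")
  case False
  then have "0 < 4 * (real n)\<^sup>2 / \<kappa>\<^sup>2 / (real m + 1)" using \<kappa> by simp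
  then show ?thesis
    unfolding l1_norm_def
  proof (rule ereal_le_mult_Inf_sq)
    fix x assume "x \<in> {ereal (\<Sum>\<^sub>\<infinity>w\<in>D. sqrt (\<Sum>i<n. (c w i)\<^sup>2)) | c.
      countable {w\<in>D. \<exists>i<n. c w i \<noteq> 0} \<and>
      (\<lambda>w. sqrt (\<Sum>i<n. (c w i)\<^sup>2)) summable_on D \<and>
      (\<forall>i<n. ((\<lambda>w. c w i *\<^sub>R w) has_sum \<psi> i) D)}"
    then obtain c where x: "x = ereal (\<Sum>\<^sub>\<infinity>w\<in>D. sqrt (\<Sum>i<n. (c w i)\<^sup>2))"
      and cost: "(\<lambda>w. sqrt (\<Sum>i<n. (c w i)\<^sup>2)) summable_on D"
      and rep: "\<forall>i<n. ((\<lambda>w. c w i *\<^sub>R w) has_sum \<psi> i) D"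
      by blast
    show "0 \<le> x" unfolding x by (simp add: infsum_nonneg sum_nonneg)
    show "ereal (residual n \<phi> (Wsp \<omega> m))
      \<le> ereal (4 * (real n)\<^sup>2 / \<kappa>\<^sup>2 / (real m + 1)) * x\<^sup>2
        + ereal ((real n)\<^sup>2 * (\<Sum>i<n. (norm (\<phi> i - \<psi> i))\<^sup>2))"
      using worst_case_OMP_residual_bound[OF D orth \<kappa> omp has_sum_infsum[OF cost] rep m]
      unfolding x by simp
  qed
qed (simp add: residual_def flip: zero_ereal_def)

theorem theorem4:
  fixes D :: "'a::{real_inner, complete_space} set"
    and \<phi> \<psi> v \<omega> :: "nat \<Rightarrow> 'a"
    and n :: nat and \<kappa> :: real
  assumes "dictionary D"
    and "orthonormal_fam n \<phi>"
    and "0 < \<kappa>" and "\<kappa> < 1"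
    and "worst_case_OMP D (span (\<phi> ` {..<n})) \<kappa> v \<omega>"
  shows "\<forall>m\<ge>1. ereal (residual n \<phi> (Wsp \<omega> m))
           \<le> 4 * ereal (real n ^ 2) * (l1_norm D n \<psi>)\<^sup>2 / ereal (\<kappa>\<^sup>2) / ereal (real m + 1)
             + ereal (real n ^ 2 * (\<Sum>i<n. (norm (\<phi> i - \<psi> i))\<^sup>2))"
proof (intro allI impI)
  fix m :: nat assume m: "1 \<le> m"
  have D: "\<forall>w\<in>D. norm w = 1" using assms(1) unfolding dictionary_def by simp
  have "0 \<le> (l1_norm D n \<psi>)\<^sup>2"
    by (cases "l1_norm D n \<psi>") (auto simp: power2_eq_square)
  then have "4 * ereal (real n ^ 2) * (l1_norm D n \<psi>)\<^sup>2 / ereal (\<kappa>\<^sup>2) / ereal (real m + 1)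
      = ereal (4 * (real n)\<^sup>2 / \<kappa>\<^sup>2 / (real m + 1)) * (l1_norm D n \<psi>)\<^sup>2"
    using assms(3) by (cases "(l1_norm D n \<psi>)\<^sup>2") (auto simp: ereal_divide ereal_mult_divide)
  then show "ereal (residual n \<phi> (Wsp \<omega> m))
      \<le> 4 * ereal (real n ^ 2) * (l1_norm D n \<psi>)\<^sup>2 / ereal (\<kappa>\<^sup>2) / ereal (real m + 1)
        + ereal (real n ^ 2 * (\<Sum>i<n. (norm (\<phi> i - \<psi> i))\<^sup>2))"
    using worst_case_OMP_residual_le_l1_norm[OF D assms(2,3,5) m] by simp
qed

end
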